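(* Let $a,x\in \mathcal{A}$, $\lambda,\mu\in \mathbb{C}^*$, $ax=\lambda xa$ and $a^*x=\mu xa^*$. If $a\in \mathcal{A}^{\mathrm{gcEP}}$, then $a^{\mathrm{gcEP}}x=\lambda^{-1}xa^{\mathrm{gcEP}}$.
   Context: $\mathcal{A}$ is a complex Banach *-algebra with identity, and $\mathbb{C}^*$ is the set of nonzero complex numbers. An element $a$ has a generalized core-EP inverse if there is $y\in\mathcal{A}$ with $y=ay^2$, $(ay)^*=ay$, $\lim_{n\to\infty}\|a^n-ya^{n+1}\|^{1/n}=0$; such $y$ is unique, denoted $a^{\mathrm{gcEP}}$, and $\mathcal{A}^{\mathrm{gcEP}}$ is the set of such $a$. *)

theory Defs
  imports "HOL-Analysis.Analysis"
begin

text \<open>A complex unital Banach algebra with involution (Banach *-algebra).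
  HOL has no complex vector space class, so complex scalar multiplication
  is added as a parameter compatible with the real one.\<close>

class banach_star_algebra = real_normed_algebra_1 + banach +
  fixes scaleC :: "complex \<Rightarrow> 'a \<Rightarrow> 'a"
    and adj :: "'a \<Rightarrow> 'a"
  assumes scaleC_add_right: "scaleC c (x + y) = scaleC c x + scaleC c y"
    and scaleC_add_left: "scaleC (b + c) x = scaleC b x + scaleC c x"
    and scaleC_scaleC: "scaleC b (scaleC c x) = scaleC (b * c) x"
    and scaleC_one: "scaleC 1 x = x"
    and scaleC_of_real: "scaleC (complex_of_real r) x = scaleR r x"
    and norm_scaleC: "norm (scaleC c x) = cmod c * norm x"
    and mult_scaleC_left: "scaleC c x * y = scaleC c (x * y)"
    and mult_scaleC_right: "x * scaleC c y = scaleC c (x * y)"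
    and adj_adj: "adj (adj x) = x"
    and adj_add: "adj (x + y) = adj x + adj y"
    and adj_scaleC: "adj (scaleC c x) = scaleC (cnj c) (adj x)"
    and adj_mult: "adj (x * y) = adj y * adj x"

definition is_gcEP_inverse :: "'a::banach_star_algebra \<Rightarrow> 'a \<Rightarrow> bool" where
  "is_gcEP_inverse a y \<longleftrightarrow>
     y = a * y * y \<and> adj (a * y) = a * y \<and>
     (\<lambda>n. root n (norm (a ^ n - y * a ^ (Suc n)))) \<longlonglongrightarrow> 0"

definition gcEP_set :: "'a::banach_star_algebra set" where
  "gcEP_set = {a. \<exists>y. is_gcEP_inverse a y}"

definition gcEP :: "'a::banach_star_algebra \<Rightarrow> 'a" where
  "gcEP a = (THE y. is_gcEP_inverse a y)"

end

theory Submission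
  imports Defs
begin

(* If w = a^n v_n for every n with ||v_n|| <= K B^n, then w = y a w for every gcEP inverse y
   of a: indeed w - y a w = (a^n - y a^(n+1)) v_n, and ||a^n - y a^(n+1)|| decays faster than
   any geometric sequence. Such elements w include y itself, and they are preserved by right
   multiplication and by left multiplication with any u satisfying u a = c a u.
   Applied to x y this gives x y = y a x y. Applied to x* y* and followed by the involution,
   using that a y is self-adjoint, it gives y x = y x a y. Hence
   y x = y (x a) y = l^-1 y a x y = l^-1 x y. *)

lemma root_decay_mult_power_tendsto_0:
  fixes e :: "nat \<Rightarrow> real"
  assumes decay: "(\<lambda>n. root n (e n)) \<longlonglongrightarrow> 0" and nonneg: "\<And>n. e n \<ge> 0"
  shows "(\<lambda>n. e n * B ^ n) \<longlonglongrightarrow> 0"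
proof (rule Lim_null_comparison)
  define \<epsilon> where "\<epsilon> = 1 / (2 * (\<bar>B\<bar> + 1))"
  have "\<epsilon> > 0" by (simp add: \<epsilon>_def add_pos_nonneg)
  have \<epsilon>B: "\<epsilon> * \<bar>B\<bar> \<le> 1 / 2" by (simp add: \<epsilon>_def field_simps)
  show "\<forall>\<^sub>F n in sequentially. norm (e n * B ^ n) \<le> (1 / 2) ^ n"
    using order_tendstoD(2)[OF decay \<open>\<epsilon> > 0\<close>] eventually_gt_at_top[of 0]
  proof eventually_elim
    case (elim n)
    have "e n = root n (e n) ^ n" using elim nonneg[of n] by simp
    also have "\<dots> \<le> \<epsilon> ^ n" using elim nonneg[of n] by (intro power_mono) (auto intro: real_root_ge_zero)
    finally have "e n \<le> \<epsilon> ^ n" .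
    then have "norm (e n * B ^ n) \<le> \<epsilon> ^ n * \<bar>B\<bar> ^ n"
      using nonneg[of n] by (simp add: abs_mult power_abs mult_right_mono)
    also have "\<dots> = (\<epsilon> * \<bar>B\<bar>) ^ n" by (simp add: power_mult_distrib)
    also have "\<dots> \<le> (1 / 2) ^ n" using \<epsilon>B \<open>\<epsilon> > 0\<close> by (intro power_mono) auto
    finally show ?case .
  qed
  show "(\<lambda>n. (1 / 2 :: real) ^ n) \<longlonglongrightarrow> 0" by (rule LIMSEQ_power_zero) simp
qed

lemma zero_if_norm_le_root_decay:
  fixes z :: "'a::real_normed_vector"
  assumes "(\<lambda>n. root n (e n)) \<longlonglongrightarrow> 0" and "\<And>n. e n \<ge> 0"
    and bound: "\<And>n. norm z \<le> K * (e n * B ^ n)"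
  shows "z = 0"
proof -
  have "(\<lambda>n. K * (e n * B ^ n)) \<longlonglongrightarrow> 0"
    by (intro tendsto_mult_right_zero root_decay_mult_power_tendsto_0 assms)
  then have "norm z \<le> 0" by (rule LIMSEQ_le_const) (auto intro: bound)
  then show ?thesis by simp
qed

lemma eq_power_mult_power_Suc:
  fixes a y :: "'a::monoid_mult"
  assumes "y = a * y * y"
  shows "y = a ^ n * y ^ Suc n"
proof (induction n)
  case (Suc n)
  have "a ^ Suc n * y ^ Suc (Suc n) = a ^ n * ((a * y * y) * y ^ n)"
    by (simp add: mult.assoc power_commutes flip: mult.assoc[of "a ^ n" a])
  with Suc show ?case by (simp flip: assms)
qed simp

lemma scaleC_commute_power:
  fixes u a :: "'a::banach_star_algebra"
  assumes "u * a = scaleC c (a * u)"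
  shows "u * a ^ n = scaleC (c ^ n) (a ^ n * u)"
proof (induction n)
  case 0
  show ?case by (simp add: scaleC_one)
next
  case (Suc n)
  have "u * a ^ Suc n = (u * a ^ n) * a" by (simp only: power_Suc2 mult.assoc)
  also have "\<dots> = scaleC (c ^ n) (a ^ n * (u * a))"
    by (simp add: Suc mult_scaleC_left mult.assoc)
  also have "\<dots> = scaleC (c ^ n * c) (a ^ n * a * u)"
    by (simp add: assms mult_scaleC_right scaleC_scaleC mult.assoc)
  also have "\<dots> = scaleC (c ^ Suc n) (a ^ Suc n * u)" by (simp only: power_Suc2)
  finally show ?case .
qed

definition geometric_power_multiple :: "'a::real_normed_algebra_1 \<Rightarrow> 'a \<Rightarrow> bool" where
  "geometric_power_multiple a w \<longleftrightarrow> (\<exists>K B. \<forall>n. \<exists>v. w = a ^ n * v \<and> norm v \<le> K * B ^ n)"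

lemma geometric_power_multipleI:
  assumes "\<And>n. w = a ^ n * v n" and "\<And>n. norm (v n) \<le> K * B ^ n"
  shows "geometric_power_multiple a w"
  unfolding geometric_power_multiple_def using assms by blast

lemma geometric_power_multipleE:
  assumes "geometric_power_multiple a w"
  obtains v K B where "\<And>n. w = a ^ n * v n" and "\<And>n. norm (v n) \<le> K * B ^ n"
  using assms unfolding geometric_power_multiple_def by metis

lemma geometric_power_multiple_mult_right:
  assumes "geometric_power_multiple a w"
  shows "geometric_power_multiple a (w * t)"
proof -
  obtain v K B where w: "\<And>n. w = a ^ n * v n" and v: "\<And>n. norm (v n) \<le> K * B ^ n"
    using assms by (metis geometric_power_multipleE)
  show ?thesis
  proof (rule geometric_power_multipleI)
    show "w * t = a ^ n * (v n * t)" for n by (simp add: w[of n] mult.assoc)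
    show "norm (v n * t) \<le> (norm t * K) * B ^ n" for n
      using norm_mult_ineq[of "v n" t] mult_left_mono[OF v[of n] norm_ge_zero[of t]]
      by (simp add: mult_ac)
  qed
qed

lemma geometric_power_multiple_mult_left:
  fixes a u w :: "'a::banach_star_algebra"
  assumes comm: "u * a = scaleC c (a * u)" and "geometric_power_multiple a w"
  shows "geometric_power_multiple a (u * w)"
proof -
  obtain v K B where w: "\<And>n. w = a ^ n * v n" and v: "\<And>n. norm (v n) \<le> K * B ^ n"
    using assms(2) by (metis geometric_power_multipleE)
  show ?thesis
  proof (rule geometric_power_multipleI)
    show "u * w = a ^ n * scaleC (c ^ n) (u * v n)" for n
      by (simp add: w[of n] scaleC_commute_power[OF comm] mult_scaleC_left mult_scaleC_right
          flip: mult.assoc)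
    have uv: "norm (u * v n) \<le> norm u * (K * B ^ n)" for n
      using norm_mult_ineq[of u "v n"] mult_left_mono[OF v[of n] norm_ge_zero[of u]] by simp
    show "norm (scaleC (c ^ n) (u * v n)) \<le> (norm u * K) * (cmod c * B) ^ n" for n
    proof -
      have "norm (scaleC (c ^ n) (u * v n)) = cmod c ^ n * norm (u * v n)"
        by (simp add: norm_scaleC norm_power)
      also have "\<dots> \<le> cmod c ^ n * (norm u * (K * B ^ n))" by (intro mult_left_mono uv) simp
      also have "\<dots> = (norm u * K) * (cmod c * B) ^ n" by (simp add: power_mult_distrib mult_ac)
      finally show ?thesis .
    qed
  qed
qed

lemma gcEP_inverse_fixes_geometric_power_multiple:
  assumes z: "is_gcEP_inverse a z" and "geometric_power_multiple a w"
  shows "w = z * a * w"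
proof -
  obtain v K B where w: "\<And>n. w = a ^ n * v n" and v: "\<And>n. norm (v n) \<le> K * B ^ n"
    using assms(2) by (metis geometric_power_multipleE)
  let ?e = "\<lambda>n. norm (a ^ n - z * a ^ Suc n)"
  have "w - z * a * w = 0"
  proof (rule zero_if_norm_le_root_decay)
    show "(\<lambda>n. root n (?e n)) \<longlonglongrightarrow> 0" using z by (simp add: is_gcEP_inverse_def)
    fix n
    have "w - z * a * w = (a ^ n - z * a ^ Suc n) * v n"
      by (subst (1 2) w[of n]) (simp add: left_diff_distrib mult.assoc)
    also have "norm \<dots> \<le> ?e n * norm (v n)" by (rule norm_mult_ineq)
    also have "\<dots> \<le> ?e n * (K * B ^ n)" by (intro mult_left_mono v) simp
    finally show "norm (w - z * a * w) \<le> K * (?e n * B ^ n)" by (simp add: mult_ac)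
  qed simp
  then show ?thesis by simp
qed

lemma gcEP_inverse_geometric_power_multiple:
  assumes "is_gcEP_inverse a y"
  shows "geometric_power_multiple a y"
proof (rule geometric_power_multipleI)
  show "y = a ^ n * y ^ Suc n" for n
    using assms by (intro eq_power_mult_power_Suc) (simp add: is_gcEP_inverse_def)
  show "norm (y ^ Suc n) \<le> norm y * norm y ^ n" for n
    using norm_power_ineq[of y "Suc n"] by simp
qed

lemma gcEP_inverse_mult_self:
  "is_gcEP_inverse a y \<Longrightarrow> y * a * y = y"
  by (metis gcEP_inverse_fixes_geometric_power_multiple gcEP_inverse_geometric_power_multiple)

lemma gcEP_inverse_unique:
  assumes y: "is_gcEP_inverse a y" and z: "is_gcEP_inverse a z"
  shows "y = z"
proof -
  have yzy: "y = z * a * y" and zyz: "z = y * a * z"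
    using y z by (metis gcEP_inverse_fixes_geometric_power_multiple
        gcEP_inverse_geometric_power_multiple)+
  have "a * y = adj (a * z * (a * y))" using y yzy by (metis is_gcEP_inverse_def mult.assoc)
  also have "\<dots> = a * y * (a * z)" using y z by (simp add: is_gcEP_inverse_def adj_mult)
  also have "\<dots> = a * z" using zyz by (metis mult.assoc)
  finally have "a * y = a * z" .
  then show ?thesis using yzy gcEP_inverse_mult_self[OF z] by (metis mult.assoc)
qed

lemma gcEP_eqI: "is_gcEP_inverse a y \<Longrightarrow> gcEP a = y"
  unfolding gcEP_def by (blast intro: gcEP_inverse_unique)

lemma gcEP_inverse_commute_right:
  assumes y: "is_gcEP_inverse a y" and comm: "x * a = scaleC c (a * x)"
  shows "x * y = y * a * (x * y)"
  using y comm by (metis gcEP_inverse_fixes_geometric_power_multiple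
      gcEP_inverse_geometric_power_multiple geometric_power_multiple_mult_left)

lemma gcEP_inverse_commute_left:
  fixes a x y :: "'a::banach_star_algebra"
  assumes y: "is_gcEP_inverse a y" and comm: "adj x * a = scaleC c (a * adj x)"
  shows "y * x = y * x * (a * y)"
proof -
  have ay: "adj (a * y) = a * y" and aya: "a * y * y = y"
    using y by (simp_all add: is_gcEP_inverse_def)
  have adj_y: "a * y * adj y = adj y"
    using gcEP_inverse_mult_self[OF y] ay by (metis adj_mult mult.assoc)
  have "a * a = scaleC 1 (a * a)" by (simp add: scaleC_one)
  then have "geometric_power_multiple a (a * y * adj y)"
    by (intro geometric_power_multiple_mult_right geometric_power_multiple_mult_left
        gcEP_inverse_geometric_power_multiple y)
  then have "geometric_power_multiple a (adj x * adj y)"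
    by (simp add: adj_y geometric_power_multiple_mult_left[OF comm])
  then have "adj x * adj y = y * a * (adj x * adj y)"
    by (rule gcEP_inverse_fixes_geometric_power_multiple[OF y])
  then have "adj x * adj y = a * y * (adj x * adj y)"
    using aya by (metis mult.assoc)
  then have "y * x = adj (a * y * (adj x * adj y))" by (metis adj_mult adj_adj)
  also have "\<dots> = adj (adj x * adj y) * adj (a * y)" by (rule adj_mult)
  also have "\<dots> = y * x * (a * y)" by (simp only: ay adj_adj adj_mult[of "adj x"])
  finally show ?thesis .
qed

theorem lemma3p2:
  fixes a x :: "'a::banach_star_algebra" and l m :: complex
  assumes "l \<noteq> 0" and "m \<noteq> 0"
    and "a * x = scaleC l (x * a)"
    and "adj a * x = scaleC m (x * adj a)"
    and "a \<in> gcEP_set"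
  shows "gcEP a * x = scaleC (inverse l) (x * gcEP a)"
proof -
  obtain y where y: "is_gcEP_inverse a y" using assms(5) by (auto simp: gcEP_set_def)
  have xa: "x * a = scaleC (inverse l) (a * x)"
    using assms(1,3) by (simp add: scaleC_scaleC scaleC_one)
  have "adj x * a = scaleC (cnj m) (a * adj x)"
    using arg_cong[OF assms(4), of adj] by (simp add: adj_mult adj_scaleC adj_adj)
  then have "y * x = y * x * (a * y)" by (rule gcEP_inverse_commute_left[OF y])
  also have "\<dots> = y * (x * a) * y" by (simp add: mult.assoc)
  also have "\<dots> = scaleC (inverse l) (y * a * (x * y))"
    by (simp add: xa mult_scaleC_left mult_scaleC_right mult.assoc)
  also have "\<dots> = scaleC (inverse l) (x * y)"
    using gcEP_inverse_commute_right[OF y xa] by simp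
  finally show ?thesis by (simp add: gcEP_eqI[OF y])
qed

end
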